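(* For every positive integer $n$, $$b^{2}_{3,8}(2n+1)\equiv 2\,b_{2,3}(n)\pmod 3.$$
   Context: For integers $r\ge1$ write $f_r=\prod_{j\ge1}(1-q^{rj})$. For coprime positive integers $\ell,m$ and a positive integer $k$, $b^{k}_{\ell,m}(n)$ denotes the number of $k$-colored partitions of $n$ into parts not divisible by $\ell$ or by $m$, i.e. $\sum_{n\ge0} b^{k}_{\ell,m}(n)q^n=\dfrac{f_\ell^k f_m^k}{f_1^k f_{\ell m}^k}$, and $b_{\ell,m}=b^1_{\ell,m}$. Thus $\sum b^2_{3,8}(n)q^n=\dfrac{f_3^2f_8^2}{f_1^2f_{24}^2}$ and $\sum b_{2,3}(n)q^n=\dfrac{f_2f_3}{f_1f_6}$. *)

theory Defs
  imports Main "HOL-Library.Multiset" "HOL-Number_Theory.Cong"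
begin

text \<open>A k-colored partition of n is a finite multiset of pairs (part, colour),
  with colour < k, whose parts sum to n. We restrict to parts not divisible
  by l and not divisible by m.\<close>

definition colored_partitions :: "nat \<Rightarrow> nat \<Rightarrow> nat \<Rightarrow> nat \<Rightarrow> (nat \<times> nat) multiset set" where
  "colored_partitions k l m n =
     {M. (\<forall>x\<in>#M. 0 < fst x \<and> \<not> l dvd fst x \<and> \<not> m dvd fst x \<and> snd x < k)
         \<and> sum_mset (image_mset fst M) = n}"

definition b :: "nat \<Rightarrow> nat \<Rightarrow> nat \<Rightarrow> nat \<Rightarrow> nat" where
  "b k l m n = card (colored_partitions k l m n)"

end

theory Submission
  imports Defs "HOL-Computational_Algebra.Formal_Power_Series" "HOL-Library.Numeral_Type"
begin

text \<open>Modulo 3 the Frobenius map gives \<open>f\<^sub>3 = f\<^sub>1\<^sup>3\<close> and \<open>f\<^sub>2\<^sub>4 = f\<^sub>8\<^sup>3\<close>, so the generating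
  function of \<open>b\<^sup>2\<^sub>3\<^sub>,\<^sub>8\<close> becomes \<open>f\<^sub>1\<^sup>4 / f\<^sub>8\<^sup>4\<close> and that of \<open>b\<^sub>2\<^sub>,\<^sub>3\<close> becomes
  \<open>f\<^sub>1\<^sup>2 / f\<^sub>2\<^sup>2\<close>. As \<open>f\<^sub>8(q) = f\<^sub>4(q\<^sup>2)\<close>, the odd part of the former is the odd part of
  \<open>f\<^sub>1\<^sup>4\<close> divided by \<open>f\<^sub>4\<^sup>4\<close>. Gauss's identity \<open>f\<^sub>1\<^sup>2 / f\<^sub>2 = \<phi>(-q)\<close>, the dissection
  \<open>\<phi>(-q) = \<phi>(q\<^sup>4) - 2 q \<psi>(q\<^sup>8)\<close> and \<open>\<phi>(q) \<psi>(q\<^sup>2) = f\<^sub>2\<^sup>4 / f\<^sub>1\<^sup>2\<close>, all consequences of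
  the Jacobi triple product, show that the odd part of \<open>f\<^sub>1\<^sup>4\<close> is \<open>-4 f\<^sub>1\<^sup>2 f\<^sub>4\<^sup>4 / f\<^sub>2\<^sup>2\<close>;
  finally \<open>-4 = 2\<close> modulo 3.

  Infinite products are handled through their finite truncations, which determine any given
  coefficient, and the triple product is proved in a finite form with Gaussian binomial
  coefficients.\<close>

unbundle fps_syntax

section \<open>Truncated equality and infinite products\<close>

definition fps_agree :: "nat \<Rightarrow> 'a::comm_ring_1 fps \<Rightarrow> 'a fps \<Rightarrow> bool" where
  "fps_agree m f g \<longleftrightarrow> (\<forall>i\<le>m. f $ i = g $ i)"

lemma fps_agree_refl [simp]: "fps_agree m f f"
  by (simp add: fps_agree_def)

lemma fps_agree_sym: "fps_agree m f g \<Longrightarrow> fps_agree m g f"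
  by (simp add: fps_agree_def)

lemma fps_agree_trans [trans]: "fps_agree m f g \<Longrightarrow> fps_agree m g h \<Longrightarrow> fps_agree m f h"
  by (simp add: fps_agree_def)

lemma fps_agree_mono: "fps_agree m f g \<Longrightarrow> m' \<le> m \<Longrightarrow> fps_agree m' f g"
  by (simp add: fps_agree_def)

lemma fps_agree_add: "fps_agree m f g \<Longrightarrow> fps_agree m f' g' \<Longrightarrow> fps_agree m (f + f') (g + g')"
  by (simp add: fps_agree_def)

lemma fps_agree_diff: "fps_agree m f g \<Longrightarrow> fps_agree m f' g' \<Longrightarrow> fps_agree m (f - f') (g - g')"
  by (simp add: fps_agree_def)

lemma fps_agree_mult: "fps_agree m f g \<Longrightarrow> fps_agree m f' g' \<Longrightarrow> fps_agree m (f * f') (g * g')"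
  unfolding fps_agree_def fps_mult_nth by (auto intro!: sum.cong)

lemma fps_agree_power: "fps_agree m f g \<Longrightarrow> fps_agree m (f ^ k) (g ^ k)"
  by (induction k) (auto intro: fps_agree_mult)

lemma fps_agree_prod: "(\<And>j. j \<in> A \<Longrightarrow> fps_agree m (f j) (g j)) \<Longrightarrow> fps_agree m (prod f A) (prod g A)"
  by (induction A rule: infinite_finite_induct) (auto intro: fps_agree_mult)

lemma fps_agree_sum: "(\<And>j. j \<in> A \<Longrightarrow> fps_agree m (f j) (g j)) \<Longrightarrow> fps_agree m (sum f A) (sum g A)"
  by (induction A rule: infinite_finite_induct) (auto intro: fps_agree_add)

lemma fps_eq_if_agree: "(\<And>m. fps_agree m f g) \<Longrightarrow> f = g"
  by (auto simp: fps_agree_def fps_eq_iff)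

lemma fps_agree_X_power_mult_0: "m < k \<Longrightarrow> fps_agree m (fps_X ^ k * f) 0"
  by (simp add: fps_agree_def fps_X_power_mult_nth)

lemma fps_X_power_mult_left_cancel:
  assumes "fps_X ^ k * f = fps_X ^ k * g"
  shows "f = g"
proof (rule fps_ext)
  fix n
  show "f $ n = g $ n"
    using arg_cong [OF assms, of "\<lambda>h. h $ (n + k)"] by (simp add: fps_X_power_mult_nth)
qed

lemma fps_agree_mult_left_cancel:
  fixes f g h :: "'a::comm_ring_1 fps"
  assumes "f $ 0 = 1" and "fps_agree m (f * g) (f * h)"
  shows "fps_agree m g h"
proof -
  define u where "u = fps_left_inverse f 1"
  have inv: "u * f = 1"
    unfolding u_def using assms(1) by (intro fps_left_inverse) simp
  have "fps_agree m (u * (f * g)) (u * (f * h))"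
    using fps_agree_mult [OF fps_agree_refl assms(2)] .
  then show ?thesis
    by (metis inv mult.assoc mult_1_left)
qed

lemma fps_mult_left_cancel:
  fixes f g h :: "'a::comm_ring_1 fps"
  assumes "f $ 0 = 1" and "f * g = f * h"
  shows "g = h"
  by (rule fps_eq_if_agree, rule fps_agree_mult_left_cancel [OF assms(1)]) (simp add: assms(2))

definition fps_infprod_convergent :: "(nat \<Rightarrow> 'a::comm_ring_1 fps) \<Rightarrow> bool" where
  "fps_infprod_convergent u \<longleftrightarrow> (\<forall>j\<ge>1. \<forall>i<j. u j $ i = (1 :: 'a fps) $ i)"

text \<open>For convergent factors, the coefficient of \<open>q\<^sup>i\<close> in a partial product no longer changes
  once the product runs up to index \<open>i\<close>.\<close>
definition fps_infprod :: "(nat \<Rightarrow> 'a::comm_ring_1 fps) \<Rightarrow> 'a fps" where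
  "fps_infprod u = Abs_fps (\<lambda>i. (\<Prod>j\<in>{1..i}. u j) $ i)"

lemma fps_infprod_nth_0 [simp]: "fps_infprod u $ 0 = 1"
  by (simp add: fps_infprod_def)

lemma fps_agree_prod_subset:
  fixes u :: "nat \<Rightarrow> 'a::comm_ring_1 fps"
  assumes "finite A" "B \<subseteq> A" "\<And>j. j \<in> A - B \<Longrightarrow> fps_agree m (u j) 1"
  shows "fps_agree m (prod u A) (prod u B)"
proof -
  have "prod u A = prod u B * prod u (A - B)"
    using assms by (simp add: prod.subset_diff [of B A] mult.commute)
  moreover have "fps_agree m (prod u (A - B)) (prod (\<lambda>_. 1) (A - B))"
    using assms(3) by (intro fps_agree_prod) auto
  ultimately show ?thesis
    using fps_agree_mult [OF fps_agree_refl [of m "prod u B"]] by force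
qed

lemma fps_agree_partial_infprod:
  fixes u :: "nat \<Rightarrow> 'a::comm_ring_1 fps"
  assumes conv: "fps_infprod_convergent u" and tail: "\<And>j. j > M \<Longrightarrow> fps_agree m (u j) 1"
  shows "fps_agree m (\<Prod>j\<in>{1..M}. u j) (fps_infprod u)"
  unfolding fps_agree_def
proof (intro allI impI)
  fix i assume "i \<le> m"
  define K where "K = max M i"
  have "fps_agree i (\<Prod>j\<in>{1..K}. u j) (\<Prod>j\<in>{1..M}. u j)"
    using \<open>i \<le> m\<close> by (intro fps_agree_prod_subset) (auto simp: K_def intro: fps_agree_mono [OF tail])
  moreover have "fps_agree i (\<Prod>j\<in>{1..K}. u j) (\<Prod>j\<in>{1..i}. u j)"
    using conv by (intro fps_agree_prod_subset) (auto simp: K_def fps_infprod_convergent_def fps_agree_def)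
  ultimately show "(\<Prod>j\<in>{1..M}. u j) $ i = fps_infprod u $ i"
    by (simp add: fps_agree_def fps_infprod_def)
qed

lemma fps_agree_partial_infprod':
  assumes conv: "fps_infprod_convergent u" and "m \<le> M"
  shows "fps_agree m (\<Prod>j\<in>{1..M}. u j) (fps_infprod u)"
proof (rule fps_agree_partial_infprod [OF conv])
  fix j assume "M < j"
  then show "fps_agree m (u j) 1"
    using conv \<open>m \<le> M\<close> by (auto simp: fps_infprod_convergent_def fps_agree_def)
qed

lemma fps_infprod_convergent_one_plus:
  "(\<And>j. j \<ge> 1 \<Longrightarrow> j \<le> e j) \<Longrightarrow> fps_infprod_convergent (\<lambda>j. 1 + fps_X ^ e j)"
  unfolding fps_infprod_convergent_def by (metis fps_add_nth fps_X_power_nth add_0_right leD)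

lemma fps_infprod_convergent_one_minus:
  "(\<And>j. j \<ge> 1 \<Longrightarrow> j \<le> e j) \<Longrightarrow> fps_infprod_convergent (\<lambda>j. 1 - fps_X ^ e j)"
  unfolding fps_infprod_convergent_def by (metis fps_sub_nth fps_X_power_nth diff_0_right leD)

section \<open>Euler products\<close>

definition euler_prod :: "nat \<Rightarrow> 'a::comm_ring_1 fps" where
  "euler_prod r = fps_infprod (\<lambda>j. 1 - fps_X ^ (r * j))"

definition odd_minus_prod :: "'a::comm_ring_1 fps" where
  "odd_minus_prod = fps_infprod (\<lambda>j. 1 - fps_X ^ (2 * j - 1))"

definition odd_plus_prod :: "'a::comm_ring_1 fps" where
  "odd_plus_prod = fps_infprod (\<lambda>j. 1 + fps_X ^ (2 * j - 1))"

definition even_plus_prod :: "'a::comm_ring_1 fps" where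
  "even_plus_prod = fps_infprod (\<lambda>j. 1 + fps_X ^ (2 * j))"

lemma euler_prod_nth_0 [simp]: "euler_prod r $ 0 = 1"
  by (simp add: euler_prod_def)

lemma euler_prod_agree:
  assumes "r \<ge> 1" and "\<And>j. j > N \<Longrightarrow> m < r * j"
  shows "fps_agree m (\<Prod>j\<in>{1..N}. 1 - fps_X ^ (r * j)) (euler_prod r)"
  unfolding euler_prod_def
proof (rule fps_agree_partial_infprod)
  show "fps_infprod_convergent (\<lambda>j. 1 - fps_X ^ (r * j) :: 'a fps)"
    using \<open>r \<ge> 1\<close> by (intro fps_infprod_convergent_one_minus) simp
  fix j assume "j > N"
  then show "fps_agree m (1 - fps_X ^ (r * j)) (1 :: 'a fps)"
    using assms(2) [OF \<open>j > N\<close>] by (simp add: fps_agree_def)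
qed

lemma euler_prod_agree':
  "r \<ge> 1 \<Longrightarrow> m \<le> N \<Longrightarrow> fps_agree m (\<Prod>j\<in>{1..N}. 1 - fps_X ^ (r * j)) (euler_prod r)"
proof (rule euler_prod_agree)
  fix j assume "r \<ge> 1" "m \<le> N" "j > N"
  then show "m < r * j"
    using mult_le_mono1 [of 1 r j] by linarith
qed

lemma odd_minus_prod_agree:
  "m \<le> N \<Longrightarrow> fps_agree m (\<Prod>j\<in>{1..N}. 1 - fps_X ^ (2 * j - 1)) odd_minus_prod"
  unfolding odd_minus_prod_def by (rule fps_agree_partial_infprod') (auto intro!: fps_infprod_convergent_one_minus)

lemma odd_plus_prod_agree:
  "m \<le> N \<Longrightarrow> fps_agree m (\<Prod>j\<in>{1..N}. 1 + fps_X ^ (2 * j - 1)) odd_plus_prod"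
  unfolding odd_plus_prod_def by (rule fps_agree_partial_infprod') (auto intro!: fps_infprod_convergent_one_plus)

lemma even_plus_prod_agree:
  "m \<le> N \<Longrightarrow> fps_agree m (\<Prod>j\<in>{1..N}. 1 + fps_X ^ (2 * j)) even_plus_prod"
  unfolding even_plus_prod_def by (rule fps_agree_partial_infprod') (auto intro!: fps_infprod_convergent_one_plus)

lemma prod_odd_even_split:
  fixes f :: "nat \<Rightarrow> 'a::comm_monoid_mult"
  shows "(\<Prod>j\<in>{1..n}. f (2 * j - 1)) * (\<Prod>j\<in>{1..n}. f (2 * j)) = (\<Prod>j\<in>{1..2 * n}. f j)"
proof (induction n)
  case (Suc n)
  have "2 * Suc n - 1 = Suc (2 * n)" "2 * Suc n = Suc (Suc (2 * n))"
    by auto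
  then show ?case
    using Suc by (simp add: mult_ac)
qed simp

lemma odd_minus_prod_mult_euler_prod: "odd_minus_prod * euler_prod 2 = (euler_prod 1 :: 'a::comm_ring_1 fps)"
proof (rule fps_eq_if_agree)
  fix m
  have "fps_agree m (odd_minus_prod * euler_prod 2 :: 'a fps)
      ((\<Prod>j\<in>{1..m}. 1 - fps_X ^ (2 * j - 1)) * (\<Prod>j\<in>{1..m}. 1 - fps_X ^ (2 * j)))"
    using odd_minus_prod_agree [of m m] euler_prod_agree' [of 2 m m]
    by (intro fps_agree_mult) (auto intro: fps_agree_sym)
  also have "(\<Prod>j\<in>{1..m}. 1 - fps_X ^ (2 * j - 1)) * (\<Prod>j\<in>{1..m}. 1 - fps_X ^ (2 * j))
      = (\<Prod>j\<in>{1..2 * m}. 1 - fps_X ^ (1 * j) :: 'a fps)"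
    using prod_odd_even_split [of "\<lambda>j. 1 - fps_X ^ j" m] by simp
  also have "fps_agree m \<dots> (euler_prod 1)"
    by (rule euler_prod_agree') auto
  finally show "fps_agree m (odd_minus_prod * euler_prod 2) (euler_prod 1 :: 'a fps)" .
qed

lemma odd_even_plus_prod_mult_euler_prod:
  "odd_plus_prod * even_plus_prod * euler_prod 1 = (euler_prod 2 :: 'a::comm_ring_1 fps)"
proof (rule fps_eq_if_agree)
  fix m
  have "fps_agree m (odd_plus_prod * even_plus_prod * euler_prod 1 :: 'a fps)
      ((\<Prod>j\<in>{1..m}. 1 + fps_X ^ (2 * j - 1)) * (\<Prod>j\<in>{1..m}. 1 + fps_X ^ (2 * j))
        * (\<Prod>j\<in>{1..2 * m}. 1 - fps_X ^ (1 * j)))"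
    using odd_plus_prod_agree [of m m] even_plus_prod_agree [of m m] euler_prod_agree' [of 1 m "2 * m"]
    by (intro fps_agree_mult) (auto intro: fps_agree_sym)
  also have "\<dots> = (\<Prod>j\<in>{1..2 * m}. 1 + fps_X ^ j) * (\<Prod>j\<in>{1..2 * m}. 1 - fps_X ^ j)"
    using prod_odd_even_split [of "\<lambda>j. 1 + fps_X ^ j :: 'a fps" m] by simp
  also have "\<dots> = (\<Prod>j\<in>{1..2 * m}. (1 + fps_X ^ j) * (1 - fps_X ^ j))"
    by (rule prod.distrib [symmetric])
  also have "\<dots> = (\<Prod>j\<in>{1..2 * m}. 1 - fps_X ^ (2 * j) :: 'a fps)"
    by (simp add: algebra_simps flip: power_add mult_2)
  also have "fps_agree m \<dots> (euler_prod 2)"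
    by (rule euler_prod_agree') auto
  finally show "fps_agree m (odd_plus_prod * even_plus_prod * euler_prod 1) (euler_prod 2 :: 'a fps)" .
qed

section \<open>The substitution \<open>q \<mapsto> q\<^sup>2\<close>\<close>

definition subst_sq :: "'a::comm_ring_1 fps \<Rightarrow> 'a fps" where
  "subst_sq f = Abs_fps (\<lambda>n. if even n then f $ (n div 2) else 0)"

lemma subst_sq_nth: "subst_sq f $ n = (if even n then f $ (n div 2) else 0)"
  by (simp add: subst_sq_def)

lemma subst_sq_add: "subst_sq (f + g) = subst_sq f + subst_sq g"
  by (simp add: fps_eq_iff subst_sq_nth)

lemma subst_sq_diff: "subst_sq (f - g) = subst_sq f - subst_sq g"
  by (simp add: fps_eq_iff subst_sq_nth)

lemma subst_sq_minus: "subst_sq (- f) = - subst_sq f"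
  by (simp add: fps_eq_iff subst_sq_nth)

lemma subst_sq_const: "subst_sq (fps_const c) = fps_const c"
  by (auto simp: fps_eq_iff subst_sq_nth elim!: evenE)

lemma subst_sq_1: "subst_sq 1 = 1"
  using subst_sq_const [of 1] by simp

lemma subst_sq_numeral: "subst_sq (numeral k) = numeral k"
  by (simp add: fps_numeral_fps_const subst_sq_const)

lemma subst_sq_X: "subst_sq fps_X = fps_X ^ 2"
  by (auto simp: fps_eq_iff subst_sq_nth)

lemma subst_sq_mult: "subst_sq (f * g) = subst_sq f * subst_sq g"
proof (rule fps_ext)
  fix n :: nat
  let ?S = "{i \<in> {0..n}. even i \<and> even (n - i)}"
  have "(subst_sq f * subst_sq g) $ n = (\<Sum>i\<in>?S. f $ (i div 2) * g $ ((n - i) div 2))"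
    unfolding fps_mult_nth by (rule sum.mono_neutral_cong_right) (auto simp: subst_sq_nth)
  also have "\<dots> = subst_sq (f * g) $ n"
  proof (cases "even n")
    case True
    have "?S = (\<lambda>j. 2 * j) ` {0..n div 2}"
      using True by (auto elim!: evenE)
    then have "(\<Sum>i\<in>?S. f $ (i div 2) * g $ ((n - i) div 2)) = (\<Sum>j=0..n div 2. f $ j * g $ (n div 2 - j))"
      using True by (simp add: sum.reindex inj_on_def)
        (auto intro!: sum.cong elim!: evenE simp flip: diff_mult_distrib2)
    then show ?thesis
      using True by (simp add: subst_sq_nth fps_mult_nth)
  next
    case False
    then have "?S = {}"
      by auto
    then show ?thesis
      using False by (simp only: sum.empty) (simp add: subst_sq_nth)
  qed
  finally show "subst_sq (f * g) $ n = (subst_sq f * subst_sq g) $ n" ..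
qed

lemma subst_sq_power: "subst_sq (f ^ k) = subst_sq f ^ k"
  by (induction k) (simp_all add: subst_sq_1 subst_sq_mult)

lemma subst_sq_prod: "subst_sq (prod f A) = (\<Prod>j\<in>A. subst_sq (f j))"
  by (induction A rule: infinite_finite_induct) (simp_all add: subst_sq_1 subst_sq_mult)

lemma subst_sq_sum: "subst_sq (sum f A) = (\<Sum>j\<in>A. subst_sq (f j))"
  by (induction A rule: infinite_finite_induct) (simp_all add: fps_eq_iff subst_sq_nth subst_sq_add)

lemma subst_sq_X_power: "subst_sq (fps_X ^ k) = fps_X ^ (2 * k)"
  by (simp add: subst_sq_power subst_sq_X power_mult)

lemma subst_sq_agree: "fps_agree m f g \<Longrightarrow> fps_agree (2 * m + 1) (subst_sq f) (subst_sq g)"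
  unfolding fps_agree_def subst_sq_nth by auto

lemma subst_sq_euler_prod: "subst_sq (euler_prod r) = euler_prod (2 * r)"
proof (cases "r = 0")
  case True
  have "euler_prod 0 = (1 :: 'a fps)"
    by (auto simp: fps_eq_iff euler_prod_def fps_infprod_def power_0_left)
  then show ?thesis
    using True by (simp add: subst_sq_1)
next
  case False
  show ?thesis
  proof (rule fps_eq_if_agree)
    fix m
    have subst: "subst_sq (\<Prod>j\<in>{1..m}. 1 - fps_X ^ (r * j)) = (\<Prod>j\<in>{1..m}. 1 - fps_X ^ (2 * r * j) :: 'a fps)"
      by (simp add: subst_sq_prod subst_sq_diff subst_sq_1 subst_sq_X_power mult.assoc)
    have "fps_agree (2 * m + 1) (\<Prod>j\<in>{1..m}. 1 - fps_X ^ (2 * r * j)) (subst_sq (euler_prod r) :: 'a fps)"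
      unfolding subst [symmetric] using False by (intro subst_sq_agree euler_prod_agree') auto
    then have "fps_agree m (\<Prod>j\<in>{1..m}. 1 - fps_X ^ (2 * r * j)) (subst_sq (euler_prod r) :: 'a fps)"
      by (rule fps_agree_mono) simp
    moreover have "fps_agree m (\<Prod>j\<in>{1..m}. 1 - fps_X ^ (2 * r * j)) (euler_prod (2 * r) :: 'a fps)"
      using False by (intro euler_prod_agree') auto
    ultimately show "fps_agree m (subst_sq (euler_prod r)) (euler_prod (2 * r) :: 'a fps)"
      by (blast intro: fps_agree_sym fps_agree_trans)
  qed
qed

definition fps_even_part :: "'a::comm_ring_1 fps \<Rightarrow> 'a fps" where
  "fps_even_part f = Abs_fps (\<lambda>n. f $ (2 * n))"

definition fps_odd_part :: "'a::comm_ring_1 fps \<Rightarrow> 'a fps" where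
  "fps_odd_part f = Abs_fps (\<lambda>n. f $ (2 * n + 1))"

lemma fps_even_odd_decomp: "f = subst_sq (fps_even_part f) + fps_X * subst_sq (fps_odd_part f)"
  by (auto simp: fps_eq_iff subst_sq_nth fps_even_part_def fps_odd_part_def elim!: oddE)

lemma fps_odd_part_subst_sq: "fps_odd_part (subst_sq u + fps_X * subst_sq v) = v"
  by (simp add: fps_eq_iff fps_odd_part_def subst_sq_nth)

lemma fps_odd_part_mult_subst_sq: "fps_odd_part (f * subst_sq g) = fps_odd_part f * g"
proof -
  have "f * subst_sq g
      = subst_sq (fps_even_part f * g) + fps_X * subst_sq (fps_odd_part f * g)"
    by (subst fps_even_odd_decomp [of f]) (simp add: subst_sq_mult algebra_simps)
  then show ?thesis
    by (simp add: fps_odd_part_subst_sq)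
qed

section \<open>Coloured partitions\<close>

definition weighted_multisets :: "('b \<Rightarrow> nat) \<Rightarrow> 'b set \<Rightarrow> nat \<Rightarrow> 'b multiset set" where
  "weighted_multisets w S n = {M. set_mset M \<subseteq> S \<and> sum_mset (image_mset w M) = n}"

definition multiset_gf :: "('b \<Rightarrow> nat) \<Rightarrow> 'b set \<Rightarrow> 'a::comm_ring_1 fps" where
  "multiset_gf w S = Abs_fps (\<lambda>n. of_nat (card (weighted_multisets w S n)))"

lemma size_le_sum_mset_weight: "(\<And>x. x \<in># M \<Longrightarrow> w x > 0) \<Longrightarrow> size M \<le> sum_mset (image_mset w M)"
proof (induction M)
  case (add x M)
  then have "0 < w x" and "size M \<le> sum_mset (image_mset w M)"
    by simp_all
  then show ?case
    by simp
qed simp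

lemma finite_weighted_multisets:
  assumes "finite S" and "\<And>a. a \<in> S \<Longrightarrow> w a > 0"
  shows "finite (weighted_multisets w S n)"
proof (rule finite_subset)
  show "weighted_multisets w S n \<subseteq> (\<Union>s\<le>n. multisets_of_size S s)"
  proof
    fix M assume M: "M \<in> weighted_multisets w S n"
    then have "size M \<le> n"
      using assms(2) size_le_sum_mset_weight [of M w] by (auto simp: weighted_multisets_def)
    then show "M \<in> (\<Union>s\<le>n. multisets_of_size S s)"
      using M by (auto simp: weighted_multisets_def multisets_of_size_def)
  qed
  show "finite (\<Union>s\<le>n. multisets_of_size S s)"
    using assms(1) by auto
qed

lemma weighted_multisets_empty: "weighted_multisets w {} n = (if n = 0 then {{#}} else {})"
  by (auto simp: weighted_multisets_def)

lemma weighted_multisets_insert: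
  assumes "a \<notin> S"
  shows "weighted_multisets w (insert a S) n = weighted_multisets w S n
           \<union> (if w a \<le> n then add_mset a ` weighted_multisets w (insert a S) (n - w a) else {})"
    (is "?L = ?R")
proof
  show "?L \<subseteq> ?R"
  proof
    fix M assume M: "M \<in> ?L"
    show "M \<in> ?R"
    proof (cases "a \<in># M")
      case True
      then obtain M' where "M = add_mset a M'"
        by (metis multi_member_split)
      then show ?thesis
        using M by (auto simp: weighted_multisets_def)
    next
      case False
      then show ?thesis
        using M by (auto simp: weighted_multisets_def)
    qed
  qed
  show "?R \<subseteq> ?L"
    by (auto simp: weighted_multisets_def split: if_splits)
qed

lemma card_weighted_multisets_insert:
  assumes "a \<notin> S" "finite S" "\<And>x. x \<in> insert a S \<Longrightarrow> w x > 0"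
  shows "card (weighted_multisets w (insert a S) n) = card (weighted_multisets w S n)
           + (if w a \<le> n then card (weighted_multisets w (insert a S) (n - w a)) else 0)"
proof (cases "w a \<le> n")
  case True
  let ?A = "weighted_multisets w S n" and ?B = "weighted_multisets w (insert a S) (n - w a)"
  have "card (weighted_multisets w (insert a S) n) = card (?A \<union> add_mset a ` ?B)"
    using True by (subst weighted_multisets_insert [OF assms(1)]) simp
  also have "\<dots> = card ?A + card (add_mset a ` ?B)"
  proof (rule card_Un_disjoint)
    show "finite ?A"
      using assms by (intro finite_weighted_multisets) auto
    show "finite (add_mset a ` ?B)"
      using assms by (intro finite_imageI finite_weighted_multisets) auto
    have "a \<notin># M" if "M \<in> ?A" for M
      using that assms(1) by (auto simp: weighted_multisets_def)
    moreover have "a \<in># M" if "M \<in> add_mset a ` ?B" for M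
      using that by auto
    ultimately show "?A \<inter> add_mset a ` ?B = {}"
      by blast
  qed
  also have "card (add_mset a ` ?B) = card ?B"
    by (rule card_image) (simp add: inj_on_def)
  finally show ?thesis
    using True by simp
next
  case False
  then show ?thesis
    by (subst weighted_multisets_insert [OF assms(1)]) simp
qed

lemma multiset_gf_insert:
  assumes "a \<notin> S" "finite S" "\<And>x. x \<in> insert a S \<Longrightarrow> w x > 0"
  shows "multiset_gf w (insert a S) * (1 - fps_X ^ w a) = multiset_gf w S"
proof -
  have "multiset_gf w (insert a S) = multiset_gf w S + fps_X ^ w a * multiset_gf w (insert a S)"
  proof (rule fps_ext)
    fix n
    show "multiset_gf w (insert a S) $ n = (multiset_gf w S + fps_X ^ w a * multiset_gf w (insert a S)) $ n"
      unfolding multiset_gf_def fps_add_nth fps_X_power_mult_nth fps_nth_Abs_fps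
      by (subst card_weighted_multisets_insert [OF assms]) auto
  qed
  then show ?thesis
    by (simp add: algebra_simps)
qed

lemma multiset_gf_mult_prod:
  assumes "finite S" and "\<And>a. a \<in> S \<Longrightarrow> w a > 0"
  shows "multiset_gf w S * (\<Prod>a\<in>S. 1 - fps_X ^ w a) = (1 :: 'a::comm_ring_1 fps)"
  using assms
proof (induction S rule: finite_induct)
  case empty
  show ?case
    by (auto simp: fps_eq_iff multiset_gf_def weighted_multisets_empty)
next
  case (insert a S)
  have step: "multiset_gf w (insert a S) * (1 - fps_X ^ w a) = (multiset_gf w S :: 'a fps)"
    using insert by (intro multiset_gf_insert) auto
  have "multiset_gf w (insert a S) * (\<Prod>a\<in>insert a S. 1 - fps_X ^ w a)
      = multiset_gf w S * (\<Prod>a\<in>S. 1 - fps_X ^ w a :: 'a fps)"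
    using insert.hyps by (simp add: mult.assoc [symmetric] step)
  also have "\<dots> = 1"
    using insert.prems by (intro insert.IH) simp
  finally show ?case .
qed

definition partition_gf :: "nat \<Rightarrow> nat \<Rightarrow> nat \<Rightarrow> 'a::comm_ring_1 fps" where
  "partition_gf k l m = Abs_fps (\<lambda>n. of_nat (b k l m n))"

definition nondivisible_parts :: "nat \<Rightarrow> nat \<Rightarrow> nat \<Rightarrow> nat set" where
  "nondivisible_parts l m N = {p \<in> {1..N}. \<not> l dvd p \<and> \<not> m dvd p}"

lemma colored_partitions_eq_weighted_multisets:
  assumes "n \<le> N"
  shows "colored_partitions k l m n = weighted_multisets fst (nondivisible_parts l m N \<times> {..<k}) n"
proof (intro set_eqI iffI)
  fix M assume M: "M \<in> colored_partitions k l m n"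
  have "x \<in> nondivisible_parts l m N \<times> {..<k}" if "x \<in># M" for x
  proof -
    have "fst x \<le> sum_mset (image_mset fst M)"
      using that by (induction M) auto
    then show ?thesis
      using M assms that by (cases x) (auto simp: colored_partitions_def nondivisible_parts_def)
  qed
  then show "M \<in> weighted_multisets fst (nondivisible_parts l m N \<times> {..<k}) n"
    using M by (auto simp: colored_partitions_def weighted_multisets_def)
next
  fix M assume "M \<in> weighted_multisets fst (nondivisible_parts l m N \<times> {..<k}) n"
  then show "M \<in> colored_partitions k l m n"
    by (auto simp: colored_partitions_def weighted_multisets_def nondivisible_parts_def)
qed

lemma partition_gf_agree:
  "fps_agree N (partition_gf k l m * (\<Prod>p\<in>nondivisible_parts l m N. 1 - fps_X ^ p) ^ k)
     (1 :: 'a::comm_ring_1 fps)"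
proof -
  let ?S = "nondivisible_parts l m N \<times> {..<k}"
  have fin: "finite ?S" and pos: "\<And>a. a \<in> ?S \<Longrightarrow> fst a > 0"
    by (auto simp: nondivisible_parts_def)
  have "(\<Prod>a\<in>?S. 1 - fps_X ^ fst a :: 'a fps) = (\<Prod>(p, c)\<in>?S. 1 - fps_X ^ p)"
    by (simp add: case_prod_beta)
  also have "\<dots> = (\<Prod>p\<in>nondivisible_parts l m N. \<Prod>c\<in>{..<k}. 1 - fps_X ^ p)"
    by (rule prod.cartesian_product [symmetric])
  also have "\<dots> = (\<Prod>p\<in>nondivisible_parts l m N. 1 - fps_X ^ p) ^ k"
    by (simp add: prod_power_distrib)
  finally have "(\<Prod>p\<in>nondivisible_parts l m N. 1 - fps_X ^ p) ^ k = (\<Prod>a\<in>?S. 1 - fps_X ^ fst a :: 'a fps)"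
    by (rule sym)
  moreover have "fps_agree N (partition_gf k l m) (multiset_gf fst ?S :: 'a fps)"
    by (simp add: fps_agree_def partition_gf_def multiset_gf_def b_def
        colored_partitions_eq_weighted_multisets)
  ultimately have "fps_agree N (partition_gf k l m * (\<Prod>p\<in>nondivisible_parts l m N. 1 - fps_X ^ p) ^ k)
      (multiset_gf fst ?S * (\<Prod>a\<in>?S. 1 - fps_X ^ fst a) :: 'a fps)"
    by (simp add: fps_agree_mult)
  then show ?thesis
    by (simp add: multiset_gf_mult_prod [OF fin pos])
qed

lemma multiples_eq_image:
  fixes r N :: nat
  assumes "r \<ge> 1"
  shows "{p\<in>{1..N}. r dvd p} = (\<lambda>j. r * j) ` {1..N div r}"
proof (intro set_eqI iffI)
  fix p assume "p \<in> {p\<in>{1..N}. r dvd p}"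
  then obtain j where "p = r * j" "1 \<le> r * j" "r * j \<le> N"
    by (auto elim!: dvdE)
  moreover from this have "1 \<le> j" "j \<le> N div r"
    using assms less_eq_div_iff_mult_less_eq [of r j N] by (auto simp: mult.commute intro: Suc_leI)
  ultimately show "p \<in> (\<lambda>j. r * j) ` {1..N div r}"
    by auto
next
  fix p assume "p \<in> (\<lambda>j. r * j) ` {1..N div r}"
  then obtain j where "p = r * j" "1 \<le> j" "j \<le> N div r"
    by force
  moreover from this have "r * j \<le> N"
    using assms less_eq_div_iff_mult_less_eq [of r j N] by (simp add: mult.commute)
  ultimately show "p \<in> {p\<in>{1..N}. r dvd p}"
    using assms by (auto intro: order_trans [OF _ mult_le_mono [of 1 r 1 j]])
qed

lemma prod_multiples_agree:
  assumes "r \<ge> 1"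
  shows "fps_agree N (\<Prod>p\<in>{p\<in>{1..N}. r dvd p}. 1 - fps_X ^ p) (euler_prod r :: 'a::comm_ring_1 fps)"
proof -
  have "inj_on (\<lambda>j. r * j) {1..N div r}"
    using assms by (auto simp: inj_on_def)
  then have "(\<Prod>p\<in>{p\<in>{1..N}. r dvd p}. 1 - fps_X ^ p) = (\<Prod>j\<in>{1..N div r}. 1 - fps_X ^ (r * j) :: 'a fps)"
    by (subst multiples_eq_image [OF assms]) (simp add: prod.reindex)
  also have "fps_agree N \<dots> (euler_prod r)"
  proof (rule euler_prod_agree [OF assms])
    fix j assume "j > N div r"
    then show "N < r * j"
      using assms div_less_iff_less_mult [of r N j] by (simp add: mult.commute)
  qed
  finally show ?thesis .
qed

lemma prod_nondivisible_parts:
  fixes f :: "nat \<Rightarrow> 'c::comm_monoid_mult"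
  assumes "coprime l m"
  shows "(\<Prod>p\<in>nondivisible_parts l m N. f p) * (\<Prod>p\<in>{p\<in>{1..N}. l dvd p}. f p) * (\<Prod>p\<in>{p\<in>{1..N}. m dvd p}. f p)
       = (\<Prod>p\<in>{1..N}. f p) * (\<Prod>p\<in>{p\<in>{1..N}. l * m dvd p}. f p)"
proof -
  let ?L = "{p\<in>{1..N}. l dvd p}" and ?M = "{p\<in>{1..N}. m dvd p}"
  have "{1..N} = nondivisible_parts l m N \<union> (?L \<union> ?M)"
    by (auto simp: nondivisible_parts_def)
  then have "prod f {1..N} = prod f (nondivisible_parts l m N \<union> (?L \<union> ?M))"
    by (rule arg_cong)
  also have "\<dots> = prod f (nondivisible_parts l m N) * prod f (?L \<union> ?M)"
    by (rule prod.union_disjoint) (auto simp: nondivisible_parts_def)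
  finally have "prod f {1..N} = prod f (nondivisible_parts l m N) * prod f (?L \<union> ?M)" .
  moreover have "prod f (?L \<union> ?M) * prod f (?L \<inter> ?M) = prod f ?L * prod f ?M"
    by (rule prod.union_inter) auto
  moreover have "?L \<inter> ?M = {p\<in>{1..N}. l * m dvd p}"
    using assms by (auto simp: divides_mult intro: dvd_mult_left dvd_mult_right)
  ultimately show ?thesis
    by (simp add: mult.assoc)
qed

theorem partition_gf_euler_prod:
  assumes "l \<ge> 1" "m \<ge> 1" "coprime l m"
  shows "partition_gf k l m * euler_prod 1 ^ k * euler_prod (l * m) ^ k
       = (euler_prod l ^ k * euler_prod m ^ k :: 'a::comm_ring_1 fps)"
proof (rule fps_eq_if_agree)
  fix N
  let ?A = "\<Prod>p\<in>nondivisible_parts l m N. 1 - fps_X ^ p :: 'a fps"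
  let ?P = "\<lambda>r. \<Prod>p\<in>{p\<in>{1..N}. r dvd p}. 1 - fps_X ^ p :: 'a fps"
  have P: "fps_agree N (?P r) (euler_prod r)" if "r \<ge> 1" for r
    using that by (rule prod_multiples_agree)
  have P1: "?P 1 = (\<Prod>p\<in>{1..N}. 1 - fps_X ^ p)"
    by (rule prod.cong) auto
  have "partition_gf k l m * ?P 1 ^ k * ?P (l * m) ^ k
      = partition_gf k l m * ((\<Prod>p\<in>{1..N}. 1 - fps_X ^ p) * ?P (l * m)) ^ k"
    by (simp only: P1 power_mult_distrib mult.assoc)
  also have "\<dots> = partition_gf k l m * (?A * ?P l * ?P m) ^ k"
    by (simp only: prod_nondivisible_parts [OF assms(3)])
  also have "\<dots> = (partition_gf k l m * ?A ^ k) * (?P l ^ k * ?P m ^ k)"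
    by (simp only: power_mult_distrib mult_ac)
  finally have "partition_gf k l m * ?P 1 ^ k * ?P (l * m) ^ k
      = (partition_gf k l m * ?A ^ k) * (?P l ^ k * ?P m ^ k)" .
  moreover have "fps_agree N (partition_gf k l m * euler_prod 1 ^ k * euler_prod (l * m) ^ k)
      (partition_gf k l m * ?P 1 ^ k * ?P (l * m) ^ k)"
    using assms by (intro fps_agree_mult fps_agree_power fps_agree_refl fps_agree_sym [OF P]) simp_all
  ultimately have "fps_agree N (partition_gf k l m * euler_prod 1 ^ k * euler_prod (l * m) ^ k)
      ((partition_gf k l m * ?A ^ k) * (?P l ^ k * ?P m ^ k))"
    by simp
  also have "fps_agree N \<dots> (1 * (euler_prod l ^ k * euler_prod m ^ k))"
    using assms by (intro fps_agree_mult partition_gf_agree fps_agree_power P) simp_all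
  finally show "fps_agree N (partition_gf k l m * euler_prod 1 ^ k * euler_prod (l * m) ^ k)
      (euler_prod l ^ k * euler_prod m ^ k :: 'a fps)"
    by simp
qed

section \<open>A finite Jacobi triple product\<close>

text \<open>The Gaussian binomial coefficient \<open>[N, k]\<close> in the base \<open>q\<^sup>2\<close>; the index \<open>k\<close> ranges over
  the integers, so that the coefficient vanishes outside \<open>0..N\<close>.\<close>
fun gauss_binom :: "nat \<Rightarrow> int \<Rightarrow> 'a::comm_ring_1 fps" where
  "gauss_binom 0 k = (if k = 0 then 1 else 0)"
| "gauss_binom (Suc N) k = gauss_binom N (k - 1) + fps_X ^ (2 * nat k) * gauss_binom N k"

lemma gauss_binom_eq_0: "k < 0 \<or> k > int N \<Longrightarrow> gauss_binom N k = 0"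
  by (induction N arbitrary: k) auto

lemma gauss_binom_nonzero_bounds: "gauss_binom N k \<noteq> 0 \<Longrightarrow> 0 \<le> k \<and> k \<le> int N"
  using gauss_binom_eq_0 by force

lemma gauss_binom_Suc':
  "gauss_binom (Suc N) k = fps_X ^ (2 * nat (int N + 1 - k)) * gauss_binom N (k - 1) + (gauss_binom N k :: 'a::comm_ring_1 fps)"
proof (induction N arbitrary: k)
  case 0
  then show ?case
    by (cases "k = 0"; cases "k = 1") auto
next
  case (Suc N)
  have key: "fps_X ^ (2 * nat k) * (fps_X ^ (2 * nat (int N + 1 - k)) * gauss_binom N (k - 1))
      = fps_X ^ (2 * nat (int N + 2 - k)) * (fps_X ^ (2 * nat (k - 1)) * (gauss_binom N (k - 1) :: 'a fps))"
  proof (cases "gauss_binom N (k - 1) = (0 :: 'a fps)")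
    case False
    then have "0 \<le> k - 1" "k - 1 \<le> int N"
      using gauss_binom_nonzero_bounds by blast+
    then have "2 * nat k + 2 * nat (int N + 1 - k) = 2 * nat (int N + 2 - k) + 2 * nat (k - 1)"
      by linarith
    then show ?thesis
      by (simp add: mult.assoc [symmetric] flip: power_add)
  qed simp
  have "gauss_binom (Suc (Suc N)) k
      = gauss_binom (Suc N) (k - 1) + fps_X ^ (2 * nat k) * (gauss_binom (Suc N) k :: 'a fps)"
    by simp
  also have "\<dots> = (fps_X ^ (2 * nat (int N + 2 - k)) * gauss_binom N (k - 2) + gauss_binom N (k - 1))
        + fps_X ^ (2 * nat k) * (fps_X ^ (2 * nat (int N + 1 - k)) * gauss_binom N (k - 1) + gauss_binom N k)"
    using Suc.IH [of "k - 1"] Suc.IH [of k] by (simp add: algebra_simps)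
  also have "\<dots> = fps_X ^ (2 * nat (int N + 2 - k)) * (gauss_binom N (k - 2) + fps_X ^ (2 * nat (k - 1)) * gauss_binom N (k - 1))
        + (gauss_binom N (k - 1) + fps_X ^ (2 * nat k) * gauss_binom N k)"
    using key by (simp add: algebra_simps)
  also have "\<dots> = fps_X ^ (2 * nat (int (Suc N) + 1 - k)) * gauss_binom (Suc N) (k - 1) + gauss_binom (Suc N) k"
    by (simp add: algebra_simps)
  finally show ?case .
qed

lemma gauss_binom_Suc_Suc:
  "gauss_binom (Suc (Suc N)) k = fps_X ^ (2 * nat k) * gauss_binom N k
     + (1 + fps_X ^ (2 * (N + 1))) * gauss_binom N (k - 1)
     + fps_X ^ (2 * nat (int N + 2 - k)) * (gauss_binom N (k - 2) :: 'a::comm_ring_1 fps)"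
proof -
  have key: "fps_X ^ (2 * nat k) * (fps_X ^ (2 * nat (int N + 1 - k)) * gauss_binom N (k - 1))
      = fps_X ^ (2 * (N + 1)) * (gauss_binom N (k - 1) :: 'a fps)"
  proof (cases "gauss_binom N (k - 1) = (0 :: 'a fps)")
    case False
    then have "0 \<le> k - 1" "k - 1 \<le> int N"
      using gauss_binom_nonzero_bounds by blast+
    then have "nat k + nat (int N + 1 - k) = N + 1"
      by (subst nat_add_distrib [symmetric]) auto
    then have "2 * nat k + 2 * nat (int N + 1 - k) = 2 * (N + 1)"
      by (simp flip: distrib_left)
    then show ?thesis
      by (simp add: mult.assoc [symmetric] flip: power_add)
  qed simp
  have "gauss_binom (Suc (Suc N)) k
      = gauss_binom (Suc N) (k - 1) + fps_X ^ (2 * nat k) * (gauss_binom (Suc N) k :: 'a fps)"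
    by simp
  also have "\<dots> = (fps_X ^ (2 * nat (int N + 2 - k)) * gauss_binom N (k - 2) + gauss_binom N (k - 1))
        + fps_X ^ (2 * nat k) * (fps_X ^ (2 * nat (int N + 1 - k)) * gauss_binom N (k - 1) + gauss_binom N k)"
    by (simp only: gauss_binom_Suc' [of N "k - 1"] gauss_binom_Suc' [of N k]) (simp add: algebra_simps)
  also have "\<dots> = fps_X ^ (2 * nat k) * gauss_binom N k + (1 + fps_X ^ (2 * (N + 1))) * gauss_binom N (k - 1)
      + fps_X ^ (2 * nat (int N + 2 - k)) * gauss_binom N (k - 2)"
    using key by (simp add: algebra_simps)
  finally show ?thesis .
qed

definition qpoch_sq :: "nat \<Rightarrow> 'a::comm_ring_1 fps" where
  "qpoch_sq j = (\<Prod>i\<in>{1..j}. 1 - fps_X ^ (2 * i))"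

lemma qpoch_sq_0 [simp]: "qpoch_sq 0 = 1"
  by (simp add: qpoch_sq_def)

lemma qpoch_sq_Suc: "qpoch_sq (Suc j) = qpoch_sq j * (1 - fps_X ^ (2 * Suc j))"
  by (simp add: qpoch_sq_def)

lemma qpoch_sq_agree: "m \<le> j \<Longrightarrow> fps_agree m (qpoch_sq j) (euler_prod 2)"
  unfolding qpoch_sq_def by (rule euler_prod_agree') auto

lemma gauss_binom_mult_qpoch_sq:
  "0 \<le> k \<Longrightarrow> k \<le> int N \<Longrightarrow> gauss_binom N k * qpoch_sq (nat k) * qpoch_sq (N - nat k) = (qpoch_sq N :: 'a::comm_ring_1 fps)"
proof (induction N arbitrary: k)
  case 0
  then show ?case
    by simp
next
  case (Suc N)
  let ?Q = "\<lambda>e. fps_X ^ (2 * e) :: 'a fps"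
  have A: "gauss_binom N (k - 1) * qpoch_sq (nat k) * qpoch_sq (Suc N - nat k) = qpoch_sq N * (1 - ?Q (nat k))"
  proof (cases "k = 0")
    case True
    then show ?thesis
      by (simp add: gauss_binom_eq_0)
  next
    case False
    then have k1: "0 \<le> k - 1" "k - 1 \<le> int N"
      using Suc.prems by auto
    have "nat k = Suc (nat (k - 1))" "Suc N - nat k = N - nat (k - 1)"
      using k1 by linarith+
    then have "gauss_binom N (k - 1) * qpoch_sq (nat k) * qpoch_sq (Suc N - nat k)
        = (gauss_binom N (k - 1) * qpoch_sq (nat (k - 1)) * qpoch_sq (N - nat (k - 1))) * (1 - ?Q (nat k))"
      by (simp add: qpoch_sq_Suc mult_ac)
    then show ?thesis
      by (simp only: Suc.IH [OF k1])
  qed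
  have B: "?Q (nat k) * gauss_binom N k * qpoch_sq (nat k) * qpoch_sq (Suc N - nat k)
      = ?Q (nat k) * qpoch_sq N * (1 - ?Q (Suc N - nat k))"
  proof (cases "k = int N + 1")
    case True
    then show ?thesis
      by (simp add: gauss_binom_eq_0)
  next
    case False
    then have k1: "0 \<le> k" "k \<le> int N"
      using Suc.prems by auto
    then have "Suc N - nat k = Suc (N - nat k)"
      by linarith
    then have "?Q (nat k) * gauss_binom N k * qpoch_sq (nat k) * qpoch_sq (Suc N - nat k)
        = ?Q (nat k) * (gauss_binom N k * qpoch_sq (nat k) * qpoch_sq (N - nat k)) * (1 - ?Q (Suc N - nat k))"
      by (simp add: qpoch_sq_Suc mult_ac)
    then show ?thesis
      by (simp only: Suc.IH [OF k1])
  qed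
  have "nat k \<le> Suc N"
    using Suc.prems by linarith
  then have "2 * nat k + 2 * (Suc N - nat k) = 2 * Suc N"
    by simp
  then have e: "?Q (nat k) * ?Q (Suc N - nat k) = ?Q (Suc N)"
    by (simp only: power_add [symmetric])
  have "gauss_binom (Suc N) k * qpoch_sq (nat k) * qpoch_sq (Suc N - nat k)
      = gauss_binom N (k - 1) * qpoch_sq (nat k) * qpoch_sq (Suc N - nat k)
        + ?Q (nat k) * gauss_binom N k * qpoch_sq (nat k) * qpoch_sq (Suc N - nat k)"
    by (simp add: algebra_simps)
  also have "\<dots> = qpoch_sq N * (1 - ?Q (Suc N))"
    unfolding A B e [symmetric] by (simp add: algebra_simps)
  also have "\<dots> = qpoch_sq (Suc N)"
    by (simp add: qpoch_sq_Suc)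
  finally show ?case .
qed

lemma gauss_binom_agree:
  assumes "0 \<le> k" "k \<le> int N" "m \<le> nat k" "m \<le> N - nat k"
  shows "fps_agree m (gauss_binom N k * euler_prod 2) (1 :: 'a::comm_ring_1 fps)"
proof (rule fps_agree_mult_left_cancel)
  show "(euler_prod 2 :: 'a fps) $ 0 = 1"
    by simp
  have "fps_agree m (gauss_binom N k * qpoch_sq (nat k) * qpoch_sq (N - nat k))
      (gauss_binom N k * euler_prod 2 * euler_prod 2 :: 'a fps)"
    using assms by (intro fps_agree_mult qpoch_sq_agree fps_agree_refl) auto
  then have "fps_agree m (gauss_binom N k * euler_prod 2 * euler_prod 2) (qpoch_sq N :: 'a fps)"
    by (simp only: gauss_binom_mult_qpoch_sq [OF assms(1,2)] fps_agree_sym)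
  then have "fps_agree m (euler_prod 2 * (gauss_binom N k * euler_prod 2)) (qpoch_sq N :: 'a fps)"
    by (simp only: mult_ac)
  also have "fps_agree m (qpoch_sq N) (euler_prod 2 * 1 :: 'a fps)"
    using assms by (simp add: qpoch_sq_agree)
  finally show "fps_agree m (euler_prod 2 * (gauss_binom N k * euler_prod 2)) (euler_prod 2 * 1 :: 'a fps)" .
qed

definition jacobi_coeff :: "nat \<Rightarrow> int \<Rightarrow> 'a::comm_ring_1 fps" where
  "jacobi_coeff n k = fps_X ^ nat ((k - int n)\<^sup>2) * gauss_binom (2 * n) k"

lemma jacobi_coeff_eq_0: "k < 0 \<or> k > 2 * int n \<Longrightarrow> jacobi_coeff n k = (0 :: 'a::comm_ring_1 fps)"
  unfolding jacobi_coeff_def by (auto simp: gauss_binom_eq_0)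

lemma square_exponent_shift:
  fixes k :: int
  shows "0 \<le> k \<Longrightarrow> nat ((k - int (Suc n))\<^sup>2) + 2 * nat k = 2 * n + 1 + nat ((k - int n)\<^sup>2)"
    and "k - 2 \<le> int (2 * n) \<Longrightarrow>
      nat ((k - int (Suc n))\<^sup>2) + 2 * nat (int (2 * n) + 2 - k) = 2 * n + 1 + nat ((k - 2 - int n)\<^sup>2)"
proof -
  show "nat ((k - int (Suc n))\<^sup>2) + 2 * nat k = 2 * n + 1 + nat ((k - int n)\<^sup>2)" if "0 \<le> k"
  proof -
    have "int (nat ((k - int (Suc n))\<^sup>2)) = (k - int (Suc n))\<^sup>2"
      and "int (nat ((k - int n)\<^sup>2)) = (k - int n)\<^sup>2" and "int (nat k) = k"
      using that by simp_all
    then show ?thesis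
      by (subst int_int_eq [symmetric], unfold of_nat_add of_nat_mult) (simp add: algebra_simps power2_eq_square)
  qed
  show "nat ((k - int (Suc n))\<^sup>2) + 2 * nat (int (2 * n) + 2 - k) = 2 * n + 1 + nat ((k - 2 - int n)\<^sup>2)"
    if "k - 2 \<le> int (2 * n)"
  proof -
    have "int (nat ((k - int (Suc n))\<^sup>2)) = (k - int (Suc n))\<^sup>2"
      and "int (nat ((k - 2 - int n)\<^sup>2)) = (k - 2 - int n)\<^sup>2"
      and "int (nat (int (2 * n) + 2 - k)) = int (2 * n) + 2 - k"
      using that by simp_all
    then show ?thesis
      by (subst int_int_eq [symmetric], unfold of_nat_add of_nat_mult) (simp add: algebra_simps power2_eq_square)
  qed
qed

lemma jacobi_coeff_Suc:
  "jacobi_coeff (Suc n) k = fps_X ^ (2 * n + 1) * jacobi_coeff n k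
     + (1 + fps_X ^ (2 * (2 * n + 1))) * jacobi_coeff n (k - 1)
     + fps_X ^ (2 * n + 1) * (jacobi_coeff n (k - 2) :: 'a::comm_ring_1 fps)"
proof -
  let ?s = "fps_X ^ nat ((k - int (Suc n))\<^sup>2) :: 'a fps"
  have t1: "?s * (fps_X ^ (2 * nat k) * gauss_binom (2 * n) k) = fps_X ^ (2 * n + 1) * jacobi_coeff n k"
  proof (cases "gauss_binom (2 * n) k = (0 :: 'a fps)")
    case False
    then have "0 \<le> k"
      using gauss_binom_nonzero_bounds by blast
    then have "?s * fps_X ^ (2 * nat k) = fps_X ^ (2 * n + 1) * fps_X ^ nat ((k - int n)\<^sup>2)"
      by (simp only: power_add [symmetric] square_exponent_shift(1))
    then show ?thesis
      unfolding jacobi_coeff_def by (simp add: mult.assoc [symmetric])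
  qed (simp add: jacobi_coeff_def)
  have t2: "?s * ((1 + fps_X ^ (2 * (2 * n + 1))) * gauss_binom (2 * n) (k - 1))
      = (1 + fps_X ^ (2 * (2 * n + 1))) * jacobi_coeff n (k - 1)"
  proof -
    have "k - int (Suc n) = k - 1 - int n"
      by simp
    then show ?thesis
      unfolding jacobi_coeff_def by (simp only: mult_ac)
  qed
  have t3: "?s * (fps_X ^ (2 * nat (int (2 * n) + 2 - k)) * gauss_binom (2 * n) (k - 2))
      = fps_X ^ (2 * n + 1) * jacobi_coeff n (k - 2)"
  proof (cases "gauss_binom (2 * n) (k - 2) = (0 :: 'a fps)")
    case False
    then have "k - 2 \<le> int (2 * n)"
      using gauss_binom_nonzero_bounds by blast
    then have "?s * fps_X ^ (2 * nat (int (2 * n) + 2 - k)) = fps_X ^ (2 * n + 1) * fps_X ^ nat ((k - 2 - int n)\<^sup>2)"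
      by (simp only: power_add [symmetric] square_exponent_shift(2))
    then show ?thesis
      unfolding jacobi_coeff_def by (simp add: mult.assoc [symmetric])
  qed (simp add: jacobi_coeff_def)
  have "jacobi_coeff (Suc n) k = ?s * gauss_binom (Suc (Suc (2 * n))) k"
    by (simp add: jacobi_coeff_def)
  also have "\<dots> = ?s * (fps_X ^ (2 * nat k) * gauss_binom (2 * n) k)
      + ?s * ((1 + fps_X ^ (2 * (2 * n + 1))) * gauss_binom (2 * n) (k - 1))
      + ?s * (fps_X ^ (2 * nat (int (2 * n) + 2 - k)) * gauss_binom (2 * n) (k - 2))"
    by (simp only: gauss_binom_Suc_Suc distrib_left)
  also have "\<dots> = fps_X ^ (2 * n + 1) * jacobi_coeff n k + (1 + fps_X ^ (2 * (2 * n + 1))) * jacobi_coeff n (k - 1)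
      + fps_X ^ (2 * n + 1) * jacobi_coeff n (k - 2)"
    unfolding t1 t2 t3 ..
  finally show ?thesis .
qed

lemma sum_power_shift:
  fixes h :: "int \<Rightarrow> 'a::comm_ring_1" and M d e :: nat
  assumes "\<And>k. k < 0 \<or> k > int M \<Longrightarrow> h k = 0"
  shows "(\<Sum>k\<in>{0..int M + int d + int e}. z ^ nat k * h (k - int d)) = z ^ d * (\<Sum>k\<in>{0..int M}. z ^ nat k * h k)"
proof -
  have "(\<Sum>k\<in>{0..int M + int d + int e}. z ^ nat k * h (k - int d))
      = (\<Sum>k\<in>{int d..int M + int d}. z ^ nat k * h (k - int d))"
    by (rule sum.mono_neutral_right) (auto simp: assms)
  also have "\<dots> = (\<Sum>j\<in>{0..int M}. z ^ nat (j + int d) * h j)"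
    by (rule sum.reindex_bij_witness [of _ "\<lambda>j. j + int d" "\<lambda>k. k - int d"]) auto
  also have "\<dots> = (\<Sum>j\<in>{0..int M}. z ^ d * (z ^ nat j * h j))"
  proof (rule sum.cong)
    fix j assume "j \<in> {0..int M}"
    then have "nat (j + int d) = d + nat j"
      by auto
    then show "z ^ nat (j + int d) * h j = z ^ d * (z ^ nat j * h j)"
      by (simp add: power_add mult_ac)
  qed simp
  finally show ?thesis
    by (simp add: sum_distrib_left)
qed

theorem jacobi_triple_product_finite:
  "(\<Prod>j\<in>{1..n}. (z + fps_X ^ (2 * j - 1)) * (1 + z * fps_X ^ (2 * j - 1)))
     = (\<Sum>k\<in>{0..2 * int n}. z ^ nat k * (jacobi_coeff n k :: 'a::comm_ring_1 fps))"
proof (induction n)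
  case 0
  then show ?case
    by (simp add: jacobi_coeff_def)
next
  case (Suc n)
  let ?a = "fps_X ^ (2 * n + 1) :: 'a fps"
  let ?b = "fps_X ^ (2 * (2 * n + 1)) :: 'a fps"
  let ?S = "\<Sum>k\<in>{0..2 * int n}. z ^ nat k * jacobi_coeff n k"
  let ?I = "{0..2 * int (Suc n)}"
  have h: "\<And>k. k < 0 \<or> k > int (2 * n) \<Longrightarrow> jacobi_coeff n k = (0 :: 'a fps)"
    using jacobi_coeff_eq_0 by simp
  have s0: "(\<Sum>k\<in>?I. z ^ nat k * jacobi_coeff n k) = ?S"
    using sum_power_shift [where h = "jacobi_coeff n" and M = "2 * n" and z = z and d = 0 and e = 2, OF h]
    by (simp add: algebra_simps)
  have s1: "(\<Sum>k\<in>?I. z ^ nat k * jacobi_coeff n (k - 1)) = z * ?S"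
    using sum_power_shift [where h = "jacobi_coeff n" and M = "2 * n" and z = z and d = 1 and e = 1, OF h]
    by (simp add: algebra_simps)
  have s2: "(\<Sum>k\<in>?I. z ^ nat k * jacobi_coeff n (k - 2)) = z ^ 2 * ?S"
    using sum_power_shift [where h = "jacobi_coeff n" and M = "2 * n" and z = z and d = 2 and e = 0, OF h]
    by (simp add: algebra_simps)
  have "(\<Sum>k\<in>?I. z ^ nat k * jacobi_coeff (Suc n) k)
      = (\<Sum>k\<in>?I. ?a * (z ^ nat k * jacobi_coeff n k) + (1 + ?b) * (z ^ nat k * jacobi_coeff n (k - 1))
          + ?a * (z ^ nat k * jacobi_coeff n (k - 2)))"
    by (rule sum.cong) (simp_all only: jacobi_coeff_Suc ring_distribs mult_ac)
  also have "\<dots> = ?a * (\<Sum>k\<in>?I. z ^ nat k * jacobi_coeff n k) + (1 + ?b) * (\<Sum>k\<in>?I. z ^ nat k * jacobi_coeff n (k - 1))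
      + ?a * (\<Sum>k\<in>?I. z ^ nat k * jacobi_coeff n (k - 2))"
    by (simp only: sum.distrib sum_distrib_left)
  also have "\<dots> = (?a + (1 + ?b) * z + ?a * z ^ 2) * ?S"
    unfolding s0 s1 s2 by (simp add: algebra_simps)
  also have "?a + (1 + ?b) * z + ?a * z ^ 2 = (z + ?a) * (1 + z * ?a)"
  proof -
    have "?b = ?a * ?a"
      by (simp only: power_add [symmetric] mult_2)
    then show ?thesis
      by (simp only:) (simp add: algebra_simps power2_eq_square)
  qed
  finally have "(\<Sum>k\<in>?I. z ^ nat k * jacobi_coeff (Suc n) k) = (z + ?a) * (1 + z * ?a) * ?S" .
  moreover have "2 * Suc n - 1 = 2 * n + 1"
    by simp
  ultimately show ?case
    using Suc.IH by (simp add: mult_ac)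
qed

lemma jacobi_sum_agree:
  assumes "n \<ge> 2 * m + 3"
    and "\<And>k. \<bar>k - int n\<bar> > int m + 1 \<Longrightarrow> E k > m"
  shows "fps_agree m (\<Sum>k\<in>{0..2 * int n}. v k * fps_X ^ E k * gauss_binom (2 * n) k * euler_prod 2)
           (\<Sum>k\<in>{0..2 * int n}. v k * fps_X ^ E k :: 'a::comm_ring_1 fps)"
proof (rule fps_agree_sum)
  fix k assume k: "k \<in> {0..2 * int n}"
  show "fps_agree m (v k * fps_X ^ E k * gauss_binom (2 * n) k * euler_prod 2) (v k * fps_X ^ E k :: 'a fps)"
  proof (cases "\<bar>k - int n\<bar> > int m + 1")
    case True
    then have "E k > m"
      by (rule assms(2))
    then have "fps_agree m (fps_X ^ E k * (v k * gauss_binom (2 * n) k * euler_prod 2)) 0"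
      and "fps_agree m (fps_X ^ E k * v k :: 'a fps) 0"
      by (simp_all add: fps_agree_X_power_mult_0)
    then show ?thesis
      by (simp add: mult_ac fps_agree_def)
  next
    case False
    then have "fps_agree m (gauss_binom (2 * n) k * euler_prod 2) (1 :: 'a fps)"
      using assms(1) k by (intro gauss_binom_agree) auto
    then have "fps_agree m (v k * fps_X ^ E k * (gauss_binom (2 * n) k * euler_prod 2)) (v k * fps_X ^ E k * 1)"
      by (rule fps_agree_mult [OF fps_agree_refl])
    then show ?thesis
      by (simp add: mult.assoc)
  qed
qed

section \<open>Theta functions\<close>

definition square_power_sum :: "int \<Rightarrow> int \<Rightarrow> 'a::comm_ring_1 fps" where
  "square_power_sum lo hi = (\<Sum>u\<in>{lo..hi}. fps_X ^ nat (u\<^sup>2))"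

definition pronic_power_sum :: "int \<Rightarrow> int \<Rightarrow> 'a::comm_ring_1 fps" where
  "pronic_power_sum lo hi = (\<Sum>u\<in>{lo..hi}. fps_X ^ nat (u\<^sup>2 + u))"

text \<open>By the Jacobi triple product these are \<open>\<Sum> q^(n\<^sup>2)\<close> and \<open>\<Sum> q^(n\<^sup>2 + n)\<close>,
  summed over \<open>n \<in> \<int>\<close>.\<close>

definition theta_square :: "'a::comm_ring_1 fps" where
  "theta_square = odd_plus_prod\<^sup>2 * euler_prod 2"

definition theta_pronic :: "'a::comm_ring_1 fps" where
  "theta_pronic = 2 * even_plus_prod\<^sup>2 * euler_prod 2"

lemma pronic_nonneg: "(s::int)\<^sup>2 + s \<ge> 0"
proof (cases "s \<ge> 0")
  case False
  then have "s * (s + 1) \<ge> 0"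
    by (intro mult_nonpos_nonpos) auto
  then show ?thesis
    by (simp add: power2_eq_square algebra_simps)
qed simp

lemma square_and_pronic_gt:
  fixes s :: int
  assumes "\<bar>s\<bar> > int m + 1"
  shows "s\<^sup>2 > int m" and "s\<^sup>2 + s > int m"
proof -
  have a: "\<bar>s\<bar> \<ge> int m + 2"
    using assms by linarith
  have "\<bar>s\<bar> * (\<bar>s\<bar> - 1) \<ge> \<bar>s\<bar> * 1"
    using a by (intro mult_left_mono) auto
  moreover have "s\<^sup>2 = \<bar>s\<bar> * \<bar>s\<bar>"
    by (simp add: power2_eq_square abs_mult_self_eq)
  ultimately show "s\<^sup>2 > int m" "s\<^sup>2 + s > int m"
    using a by (simp_all add: algebra_simps)
qed

lemma sum_center_reindex: "(\<Sum>k\<in>{0..2 * int n}. g k) = (\<Sum>u\<in>{- int n..int n}. g (u + int n))"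
  by (rule sum.reindex_bij_witness [of _ "\<lambda>u. u + int n" "\<lambda>k. k - int n"]) auto

lemma theta_square_agree:
  assumes "2 * m + 3 \<le> t"
  shows "fps_agree m theta_square (square_power_sum (- int t) (int t) :: 'a::comm_ring_1 fps)"
proof -
  let ?H = "\<Prod>j\<in>{1..t}. 1 + fps_X ^ (2 * j - 1) :: 'a fps"
  have "fps_agree m theta_square (?H\<^sup>2 * euler_prod 2)"
    unfolding theta_square_def using assms
    by (intro fps_agree_mult fps_agree_power fps_agree_refl fps_agree_sym [OF odd_plus_prod_agree]) simp
  also have "?H\<^sup>2 = (\<Sum>k\<in>{0..2 * int t}. 1 ^ nat k * jacobi_coeff t k)"
    unfolding jacobi_triple_product_finite [symmetric] by (simp add: power2_eq_square prod.distrib)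
  then have "?H\<^sup>2 * euler_prod 2
      = (\<Sum>k\<in>{0..2 * int t}. 1 * fps_X ^ nat ((k - int t)\<^sup>2) * gauss_binom (2 * t) k * euler_prod 2)"
    by (simp add: jacobi_coeff_def sum_distrib_right mult.assoc)
  also have "fps_agree m \<dots> (\<Sum>k\<in>{0..2 * int t}. 1 * fps_X ^ nat ((k - int t)\<^sup>2))"
    using assms by (rule jacobi_sum_agree) (use square_and_pronic_gt in force)
  also have "(\<Sum>k\<in>{0..2 * int t}. 1 * fps_X ^ nat ((k - int t)\<^sup>2)) = (square_power_sum (- int t) (int t) :: 'a fps)"
    unfolding square_power_sum_def sum_center_reindex by simp
  finally show ?thesis .
qed

lemma pronic_power_sum_agree:
  assumes "m + 1 \<le> t"
  shows "fps_agree m (pronic_power_sum (- int t) (int t)) (pronic_power_sum (- int t) (int t - 1) :: 'a::comm_ring_1 fps)"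
proof -
  have "{- int t..int t} = insert (int t) {- int t..int t - 1}"
    by auto
  then have "pronic_power_sum (- int t) (int t) = fps_X ^ nat ((int t)\<^sup>2 + int t) * 1 + (pronic_power_sum (- int t) (int t - 1) :: 'a fps)"
    unfolding pronic_power_sum_def by simp
  moreover have "int m < (int t)\<^sup>2 + int t"
    using assms zero_le_square [of "int t"] unfolding power2_eq_square by linarith
  then have "m < nat ((int t)\<^sup>2 + int t)"
    by linarith
  ultimately show ?thesis
    by (simp add: fps_agree_def fps_X_power_mult_nth)
qed

lemma jacobi_triple_product_finite_at_X:
  assumes "t \<ge> 1"
  shows "2 * (\<Prod>j\<in>{1..t - 1}. 1 + fps_X ^ (2 * j)) * (\<Prod>j\<in>{1..t}. 1 + fps_X ^ (2 * j))
    = (\<Sum>k\<in>{0..2 * int t}. fps_X ^ nat ((k - int t)\<^sup>2 + (k - int t)) * (gauss_binom (2 * t) k :: 'a::comm_ring_1 fps))"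
proof -
  let ?E = "\<lambda>n. \<Prod>j\<in>{1..n}. 1 + fps_X ^ (2 * j) :: 'a fps"
  have factor: "(fps_X + fps_X ^ (2 * j - 1)) * (1 + fps_X * fps_X ^ (2 * j - 1))
      = fps_X * ((1 + fps_X ^ (2 * (j - 1))) * (1 + fps_X ^ (2 * j)) :: 'a fps)" if "j \<ge> 1" for j
  proof -
    have "2 * j - 1 = Suc (2 * (j - 1))" "2 * j = Suc (2 * j - 1)"
      using that by auto
    then have "fps_X ^ (2 * j - 1) = fps_X * (fps_X ^ (2 * (j - 1)) :: 'a fps)"
      and "fps_X ^ (2 * j) = fps_X * (fps_X ^ (2 * j - 1) :: 'a fps)"
      by (metis power_Suc)+
    then show ?thesis
      by (simp add: algebra_simps)
  qed
  have shifted: "(\<Prod>j\<in>{1..t}. 1 + fps_X ^ (2 * (j - 1)) :: 'a fps) = 2 * ?E (t - 1)"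
    using assms prod.atLeast_Suc_atMost_Suc_shift [of "\<lambda>j. 1 + fps_X ^ (2 * (j - 1)) :: 'a fps" 0 "t - 1"]
    by (simp add: comp_def prod.atLeast_Suc_atMost)
  have "fps_X ^ t * (2 * ?E (t - 1) * ?E t)
      = (\<Prod>j\<in>{1..t}. fps_X * ((1 + fps_X ^ (2 * (j - 1))) * (1 + fps_X ^ (2 * j))))"
    by (simp only: prod.distrib shifted) (simp add: mult.assoc)
  also have "\<dots> = (\<Prod>j\<in>{1..t}. (fps_X + fps_X ^ (2 * j - 1)) * (1 + fps_X * fps_X ^ (2 * j - 1)))"
    by (rule prod.cong [OF refl], rule factor [symmetric]) simp
  also have "\<dots> = (\<Sum>k\<in>{0..2 * int t}. fps_X ^ nat k * jacobi_coeff t k)"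
    by (rule jacobi_triple_product_finite)
  also have "\<dots> = fps_X ^ t * (\<Sum>k\<in>{0..2 * int t}. fps_X ^ nat ((k - int t)\<^sup>2 + (k - int t)) * gauss_binom (2 * t) k)"
    unfolding sum_distrib_left
  proof (rule sum.cong)
    fix k assume k: "k \<in> {0..2 * int t}"
    have "int (nat ((k - int t)\<^sup>2)) = (k - int t)\<^sup>2"
      and "int (nat ((k - int t)\<^sup>2 + (k - int t))) = (k - int t)\<^sup>2 + (k - int t)"
      and "int (nat k) = k"
      using k pronic_nonneg [of "k - int t"] by simp_all
    then have "nat k + nat ((k - int t)\<^sup>2) = t + nat ((k - int t)\<^sup>2 + (k - int t))"
      by (subst int_int_eq [symmetric], unfold of_nat_add) (simp add: algebra_simps power2_eq_square)
    then have "fps_X ^ nat k * fps_X ^ nat ((k - int t)\<^sup>2) = fps_X ^ t * (fps_X ^ nat ((k - int t)\<^sup>2 + (k - int t)) :: 'a fps)"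
      by (simp only: power_add [symmetric])
    then show "fps_X ^ nat k * jacobi_coeff t k
        = fps_X ^ t * (fps_X ^ nat ((k - int t)\<^sup>2 + (k - int t)) * (gauss_binom (2 * t) k :: 'a fps))"
      unfolding jacobi_coeff_def by (simp add: mult.assoc [symmetric])
  qed simp
  finally show ?thesis
    by (rule fps_X_power_mult_left_cancel)
qed

lemma theta_pronic_agree:
  assumes "2 * m + 3 \<le> t"
  shows "fps_agree m theta_pronic (pronic_power_sum (- int t) (int t - 1) :: 'a::comm_ring_1 fps)"
proof -
  let ?E = "\<lambda>n. \<Prod>j\<in>{1..n}. 1 + fps_X ^ (2 * j) :: 'a fps"
  have "fps_agree m theta_pronic (2 * (?E (t - 1) * ?E t) * euler_prod 2)"
    using assms unfolding theta_pronic_def power2_eq_square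
    by (intro fps_agree_mult fps_agree_refl fps_agree_sym [OF even_plus_prod_agree]) auto
  also have "2 * (?E (t - 1) * ?E t) * euler_prod 2
      = (\<Sum>k\<in>{0..2 * int t}. fps_X ^ nat ((k - int t)\<^sup>2 + (k - int t)) * gauss_binom (2 * t) k) * euler_prod 2"
    using assms by (simp only: jacobi_triple_product_finite_at_X mult.assoc [symmetric])
  also have "\<dots> = (\<Sum>k\<in>{0..2 * int t}. 1 * fps_X ^ nat ((k - int t)\<^sup>2 + (k - int t)) * gauss_binom (2 * t) k * euler_prod 2)"
    by (simp add: sum_distrib_right)
  also have "fps_agree m \<dots> (\<Sum>k\<in>{0..2 * int t}. 1 * fps_X ^ nat ((k - int t)\<^sup>2 + (k - int t)))"
    using assms by (rule jacobi_sum_agree) (use square_and_pronic_gt in force)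
  also have "(\<Sum>k\<in>{0..2 * int t}. 1 * fps_X ^ nat ((k - int t)\<^sup>2 + (k - int t))) = (pronic_power_sum (- int t) (int t) :: 'a fps)"
    unfolding pronic_power_sum_def sum_center_reindex by simp
  also have "fps_agree m \<dots> (pronic_power_sum (- int t) (int t - 1))"
    using assms by (intro pronic_power_sum_agree) simp
  finally show ?thesis .
qed

lemma sum_int_even_odd_split:
  "(\<Sum>s\<in>{- (2 * int t)..2 * int t}. g s) = (\<Sum>u\<in>{- int t..int t}. g (2 * u)) + (\<Sum>u\<in>{- int t..int t - 1}. g (2 * u + 1))"
proof -
  have "{- (2 * int t)..2 * int t} = (\<lambda>u. 2 * u) ` {- int t..int t} \<union> (\<lambda>u. 2 * u + 1) ` {- int t..int t - 1}"
  proof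
    show "{- (2 * int t)..2 * int t} \<subseteq> (\<lambda>u. 2 * u) ` {- int t..int t} \<union> (\<lambda>u. 2 * u + 1) ` {- int t..int t - 1}"
    proof
      fix s assume s: "s \<in> {- (2 * int t)..2 * int t}"
      show "s \<in> (\<lambda>u. 2 * u) ` {- int t..int t} \<union> (\<lambda>u. 2 * u + 1) ` {- int t..int t - 1}"
      proof (cases "even s")
        case True
        then obtain u where "s = 2 * u"
          by (rule evenE)
        then show ?thesis
          using s by auto
      next
        case False
        then obtain u where "s = 2 * u + 1"
          by (rule oddE)
        then show ?thesis
          using s by auto
      qed
    qed
  qed auto
  moreover have "(\<lambda>u. 2 * u) ` {- int t..int t} \<inter> (\<lambda>u. 2 * u + 1) ` {- int t..int t - 1} = {}"
    by auto presburger
  ultimately show ?thesis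
    by (simp add: sum.union_disjoint sum.reindex inj_on_def)
qed

lemma alternating_square_sum_dissection:
  "(\<Sum>k\<in>{0..2 * int (2 * t)}. (-1) ^ nat k * fps_X ^ nat ((k - int (2 * t))\<^sup>2))
   = subst_sq (subst_sq (square_power_sum (- int t) (int t)))
       - fps_X * subst_sq (subst_sq (pronic_power_sum (- int t) (int t - 1) :: 'a::comm_ring_1 fps))"
proof -
  let ?g = "\<lambda>s. (-1) ^ nat (s + 2 * int t) * fps_X ^ nat (s\<^sup>2) :: 'a fps"
  have even: "?g (2 * u) = subst_sq (subst_sq (fps_X ^ nat (u\<^sup>2)))" if "u \<in> {- int t..int t}" for u
  proof -
    have "nat (2 * u + 2 * int t) = 2 * nat (u + int t)" and "nat ((2 * u)\<^sup>2) = 2 * (2 * nat (u\<^sup>2))"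
      using that by (auto simp: power_mult_distrib nat_mult_distrib)
    then show ?thesis
      by (simp add: subst_sq_X_power power_minus1_even mult.assoc)
  qed
  have odd: "?g (2 * u + 1) = - (fps_X * subst_sq (subst_sq (fps_X ^ nat (u\<^sup>2 + u))))" if "u \<in> {- int t..int t - 1}" for u
  proof -
    have "(2 * u + 1)\<^sup>2 = 1 + 4 * (u\<^sup>2 + u)"
      by (simp add: power2_eq_square algebra_simps)
    then have "nat ((2 * u + 1)\<^sup>2) = Suc (2 * (2 * nat (u\<^sup>2 + u)))"
      using pronic_nonneg [of u] by (simp add: nat_add_distrib nat_mult_distrib)
    moreover have "nat (2 * u + 1 + 2 * int t) = Suc (2 * nat (u + int t))"
      using that by auto
    ultimately show ?thesis
      by (simp add: subst_sq_X_power power_minus1_odd mult.assoc)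
  qed
  have "(\<Sum>k\<in>{0..2 * int (2 * t)}. (-1) ^ nat k * fps_X ^ nat ((k - int (2 * t))\<^sup>2))
      = (\<Sum>s\<in>{- (2 * int t)..2 * int t}. ?g s)"
    unfolding sum_center_reindex by (simp add: add.commute)
  also have "\<dots> = (\<Sum>u\<in>{- int t..int t}. ?g (2 * u)) + (\<Sum>u\<in>{- int t..int t - 1}. ?g (2 * u + 1))"
    by (rule sum_int_even_odd_split)
  also have "\<dots> = (\<Sum>u\<in>{- int t..int t}. subst_sq (subst_sq (fps_X ^ nat (u\<^sup>2))))
      + (\<Sum>u\<in>{- int t..int t - 1}. - (fps_X * subst_sq (subst_sq (fps_X ^ nat (u\<^sup>2 + u)))))"
    using sum.cong [OF refl even, of "{- int t..int t}"] sum.cong [OF refl odd, of "{- int t..int t - 1}"]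
    by (simp only:)
  finally show ?thesis
    by (simp add: square_power_sum_def pronic_power_sum_def subst_sq_sum sum_distrib_left sum_negf)
qed

lemma odd_minus_prod_sq_agree:
  assumes "m + 2 \<le> t"
  shows "fps_agree m (odd_minus_prod\<^sup>2 * euler_prod 2)
           (subst_sq (subst_sq (square_power_sum (- int t) (int t)))
              - fps_X * subst_sq (subst_sq (pronic_power_sum (- int t) (int t - 1))) :: 'a::comm_ring_1 fps)"
proof -
  let ?L = "\<Prod>j\<in>{1..2 * t}. 1 - fps_X ^ (2 * j - 1) :: 'a fps"
  have "fps_agree m (odd_minus_prod\<^sup>2 * euler_prod 2) (?L\<^sup>2 * euler_prod 2)"
    using assms by (intro fps_agree_mult fps_agree_power fps_agree_refl fps_agree_sym [OF odd_minus_prod_agree]) simp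
  also have "?L\<^sup>2 = (\<Sum>k\<in>{0..2 * int (2 * t)}. (-1) ^ nat k * jacobi_coeff (2 * t) k)"
  proof -
    have sq: "(-1 + fps_X ^ (2 * j - 1)) * (1 + -1 * fps_X ^ (2 * j - 1)) = -1 * (1 - fps_X ^ (2 * j - 1) :: 'a fps)\<^sup>2" for j
      by (simp add: algebra_simps power2_eq_square)
    show ?thesis
      unfolding jacobi_triple_product_finite [symmetric] sq prod.distrib
      by (simp add: prod_power_distrib power_minus1_even)
  qed
  then have "?L\<^sup>2 * euler_prod 2 = (\<Sum>k\<in>{0..2 * int (2 * t)}.
      (-1) ^ nat k * fps_X ^ nat ((k - int (2 * t))\<^sup>2) * gauss_binom (2 * (2 * t)) k * euler_prod 2)"
    by (simp add: jacobi_coeff_def sum_distrib_right mult.assoc)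
  also have "fps_agree m \<dots> (\<Sum>k\<in>{0..2 * int (2 * t)}. (-1) ^ nat k * fps_X ^ nat ((k - int (2 * t))\<^sup>2))"
    using assms by (intro jacobi_sum_agree) (use square_and_pronic_gt in force)+
  also have "\<dots> = subst_sq (subst_sq (square_power_sum (- int t) (int t)))
      - fps_X * subst_sq (subst_sq (pronic_power_sum (- int t) (int t - 1)))"
    by (rule alternating_square_sum_dissection)
  finally show ?thesis .
qed

theorem odd_minus_prod_sq_dissection:
  "odd_minus_prod\<^sup>2 * euler_prod 2
     = subst_sq (subst_sq theta_square) - fps_X * subst_sq (subst_sq theta_pronic :: 'a::comm_ring_1 fps)"
proof (rule fps_eq_if_agree)
  fix m :: nat
  define t where "t = 2 * m + 3"
  have subst_sq_twice: "fps_agree m (subst_sq (subst_sq f)) (subst_sq (subst_sq g))" if "fps_agree m f g" for f g :: "'a fps"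
    by (rule fps_agree_mono [OF subst_sq_agree [OF subst_sq_agree [OF that]]]) simp
  have "fps_agree m (odd_minus_prod\<^sup>2 * euler_prod 2)
      (subst_sq (subst_sq (square_power_sum (- int t) (int t)))
         - fps_X * subst_sq (subst_sq (pronic_power_sum (- int t) (int t - 1))) :: 'a fps)"
    by (rule odd_minus_prod_sq_agree) (simp add: t_def)
  also have "fps_agree m \<dots> (subst_sq (subst_sq theta_square) - fps_X * subst_sq (subst_sq theta_pronic))"
    using theta_square_agree [of m t] theta_pronic_agree [of m t]
    by (intro fps_agree_diff fps_agree_mult fps_agree_refl subst_sq_twice) (auto simp: t_def intro: fps_agree_sym)
  finally show "fps_agree m (odd_minus_prod\<^sup>2 * euler_prod 2)
      (subst_sq (subst_sq theta_square) - fps_X * subst_sq (subst_sq theta_pronic) :: 'a fps)" .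
qed

lemma euler_prod_1_power_2: "euler_prod 1 ^ 2 = euler_prod 2 * (odd_minus_prod\<^sup>2 * euler_prod 2 :: 'a::comm_ring_1 fps)"
  unfolding odd_minus_prod_mult_euler_prod [symmetric] by (simp add: power2_eq_square mult_ac)

lemma theta_square_mult_theta_pronic:
  "theta_square * theta_pronic * euler_prod 1 ^ 2 = 2 * (euler_prod 2 ^ 4 :: 'a::comm_ring_1 fps)"
proof -
  have "theta_square * theta_pronic * euler_prod 1 ^ 2
      = 2 * euler_prod 2 ^ 2 * (odd_plus_prod * even_plus_prod * euler_prod 1 :: 'a fps) ^ 2"
    unfolding theta_square_def theta_pronic_def by (simp add: power2_eq_square mult_ac)
  also have "\<dots> = 2 * euler_prod 2 ^ 2 * euler_prod 2 ^ 2"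
    by (simp only: odd_even_plus_prod_mult_euler_prod)
  finally show ?thesis
    by (simp add: mult.assoc flip: power_add)
qed

theorem odd_part_euler_prod_1_power_4:
  "fps_odd_part (euler_prod 1 ^ 4) * euler_prod 2 ^ 2
     = - 4 * euler_prod 1 ^ 2 * (euler_prod 4 ^ 4 :: 'a::comm_ring_1 fps)"
proof -
  define f1 f2 f4 :: "'a fps" where "f1 = euler_prod 1" and "f2 = euler_prod 2" and "f4 = euler_prod 4"
  have f2: "f2 = subst_sq f1" and f4: "f4 = subst_sq f2"
    by (simp_all add: f1_def f2_def f4_def subst_sq_euler_prod)
  have square: "a\<^sup>2 * (A - x * B)\<^sup>2 = a\<^sup>2 * (A\<^sup>2 + x\<^sup>2 * B\<^sup>2) + x * (- 2 * a\<^sup>2 * (A * B))" for a A B x :: "'a fps"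
    by (simp add: power2_eq_square algebra_simps)
  have "f1 ^ 4 = (f1\<^sup>2)\<^sup>2"
    by simp
  also have "\<dots> = (euler_prod 2 * (subst_sq (subst_sq theta_square) - fps_X * subst_sq (subst_sq theta_pronic)))\<^sup>2"
    unfolding f1_def euler_prod_1_power_2 odd_minus_prod_sq_dissection ..
  also have "\<dots> = subst_sq f1 ^ 2 * (subst_sq (subst_sq theta_square) - fps_X * subst_sq (subst_sq theta_pronic))\<^sup>2"
    by (simp only: f2_def [symmetric] f2 power_mult_distrib)
  also have "\<dots> = subst_sq (f1\<^sup>2 * (subst_sq theta_square ^ 2 + fps_X * subst_sq theta_pronic ^ 2))
      + fps_X * subst_sq (- 2 * f1\<^sup>2 * subst_sq (theta_square * theta_pronic))"
    by (simp only: square subst_sq_mult subst_sq_add subst_sq_power subst_sq_X subst_sq_numeral subst_sq_minus)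
  finally have "fps_odd_part (f1 ^ 4) = - 2 * f1\<^sup>2 * subst_sq (theta_square * theta_pronic)"
    by (simp add: fps_odd_part_subst_sq)
  moreover have "subst_sq (theta_square * theta_pronic) * f2\<^sup>2 = 2 * f4 ^ 4"
  proof -
    have "subst_sq (theta_square * theta_pronic * f1\<^sup>2) = subst_sq (2 * f2 ^ 4)"
      unfolding f1_def f2_def theta_square_mult_theta_pronic ..
    then show ?thesis
      by (simp only: subst_sq_mult subst_sq_power subst_sq_numeral f2 [symmetric] f4 [symmetric])
  qed
  ultimately have "fps_odd_part (f1 ^ 4) * f2\<^sup>2 = - 2 * f1\<^sup>2 * (2 * f4 ^ 4)"
    by (simp only: mult.assoc)
  then show ?thesis
    unfolding f1_def f2_def f4_def by (simp add: algebra_simps)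
qed

section \<open>The congruence modulo 3\<close>

lemma one_minus_power_CHAR:
  fixes x :: "'a::comm_ring_1"
  assumes "prime CHAR('a)"
  shows "(1 - x) ^ CHAR('a) = 1 - x ^ CHAR('a)"
  using freshmans_dream [OF assms refl, of 1 "- x"] minus_power_prime_CHAR [OF refl assms, of x]
  by simp

lemma euler_prod_power_CHAR:
  assumes "prime CHAR('a::comm_ring_1)" and "r \<ge> 1"
  shows "(euler_prod r :: 'a fps) ^ CHAR('a) = euler_prod (CHAR('a) * r)"
proof (rule fps_eq_if_agree)
  fix m
  let ?p = "CHAR('a)"
  have "fps_agree m ((euler_prod r :: 'a fps) ^ ?p) ((\<Prod>j\<in>{1..m}. 1 - fps_X ^ (r * j)) ^ ?p)"
    using assms(2) by (intro fps_agree_power fps_agree_sym [OF euler_prod_agree']) auto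
  also have "(\<Prod>j\<in>{1..m}. 1 - fps_X ^ (r * j)) ^ ?p = (\<Prod>j\<in>{1..m}. 1 - fps_X ^ (?p * r * j) :: 'a fps)"
    using one_minus_power_CHAR [where 'a = "'a fps"] assms(1)
    by (simp add: prod_power_distrib flip: power_mult) (simp add: mult_ac)
  also have "fps_agree m \<dots> (euler_prod (?p * r))"
    using assms(2) prime_gt_0_nat [OF assms(1)] by (intro euler_prod_agree') auto
  finally show "fps_agree m ((euler_prod r :: 'a fps) ^ ?p) (euler_prod (?p * r))" .
qed

lemma minus_4_eq_2_CHAR_3:
  assumes "CHAR('a::comm_ring_1) = 3"
  shows "(- 4 :: 'a fps) = 2"
proof -
  have "(of_nat CHAR('a fps) :: 'a fps) = 0"
    by (rule of_nat_CHAR)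
  then have "(3 :: 'a fps) = 0"
    using assms by simp
  have "(- 4 :: 'a fps) = 2 - 2 * 3"
    by simp
  also have "\<dots> = 2"
    by (simp only: \<open>(3 :: 'a fps) = 0\<close> mult_zero_right diff_zero)
  finally show ?thesis .
qed

lemma partition_gf_2_3_8_CHAR_3:
  assumes "CHAR('a::comm_ring_1) = 3"
  shows "partition_gf 2 3 8 * euler_prod 8 ^ 4 = (euler_prod 1 ^ 4 :: 'a fps)"
proof (rule fps_mult_left_cancel)
  have frob: "euler_prod 3 = (euler_prod 1 ^ 3 :: 'a fps)" "euler_prod 24 = (euler_prod 8 ^ 3 :: 'a fps)"
    using euler_prod_power_CHAR [where 'a = 'a, of 1] euler_prod_power_CHAR [where 'a = 'a, of 8] assms
    by simp_all
  have "partition_gf 2 3 8 * euler_prod 1 ^ 2 * euler_prod 24 ^ 2 = (euler_prod 3 ^ 2 * euler_prod 8 ^ 2 :: 'a fps)"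
    using partition_gf_euler_prod [of 3 8 2] by (simp add: coprime_iff_gcd_eq_1 gcd_non_0_nat)
  then show "(euler_prod 1 ^ 2 * euler_prod 8 ^ 2) * (partition_gf 2 3 8 * euler_prod 8 ^ 4)
      = (euler_prod 1 ^ 2 * euler_prod 8 ^ 2) * (euler_prod 1 ^ 4 :: 'a fps)"
    unfolding frob by (simp add: mult_ac flip: power_mult power_add)
  show "(euler_prod 1 ^ 2 * euler_prod 8 ^ 2 :: 'a fps) $ 0 = 1"
    by (simp add: fps_power_zeroth)
qed

lemma partition_gf_2_3_CHAR_3:
  assumes "CHAR('a::comm_ring_1) = 3"
  shows "partition_gf 1 2 3 * euler_prod 2 ^ 2 = (euler_prod 1 ^ 2 :: 'a fps)"
proof (rule fps_mult_left_cancel)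
  have frob: "euler_prod 3 = (euler_prod 1 ^ 3 :: 'a fps)" "euler_prod 6 = (euler_prod 2 ^ 3 :: 'a fps)"
    using euler_prod_power_CHAR [where 'a = 'a, of 1] euler_prod_power_CHAR [where 'a = 'a, of 2] assms
    by simp_all
  have "partition_gf 1 2 3 * euler_prod 1 * euler_prod 6 = (euler_prod 2 * euler_prod 3 :: 'a fps)"
    using partition_gf_euler_prod [of 2 3 1] by (simp add: coprime_iff_gcd_eq_1 gcd_non_0_nat)
  then show "(euler_prod 1 * euler_prod 2) * (partition_gf 1 2 3 * euler_prod 2 ^ 2)
      = (euler_prod 1 * euler_prod 2) * (euler_prod 1 ^ 2 :: 'a fps)"
    unfolding frob by (simp add: mult_ac power2_eq_square power3_eq_cube)
  show "(euler_prod 1 * euler_prod 2 :: 'a fps) $ 0 = 1"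
    by simp
qed

theorem odd_part_partition_gf_2_3_8_CHAR_3:
  assumes "CHAR('a::comm_ring_1) = 3"
  shows "fps_odd_part (partition_gf 2 3 8) = (2 * partition_gf 1 2 3 :: 'a fps)"
proof (rule fps_mult_left_cancel)
  have "fps_odd_part (partition_gf 2 3 8) * euler_prod 4 ^ 4
      = fps_odd_part (partition_gf 2 3 8 * subst_sq (euler_prod 4 ^ 4) :: 'a fps)"
    by (rule fps_odd_part_mult_subst_sq [symmetric])
  also have "subst_sq (euler_prod 4 ^ 4) = (euler_prod 8 ^ 4 :: 'a fps)"
    by (simp add: subst_sq_power subst_sq_euler_prod)
  also have "partition_gf 2 3 8 * euler_prod 8 ^ 4 = (euler_prod 1 ^ 4 :: 'a fps)"
    by (rule partition_gf_2_3_8_CHAR_3 [OF assms])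
  finally have odd_B: "fps_odd_part (partition_gf 2 3 8) * euler_prod 4 ^ 4 = fps_odd_part (euler_prod 1 ^ 4 :: 'a fps)" .
  have "(euler_prod 4 ^ 4 * euler_prod 2 ^ 2) * fps_odd_part (partition_gf 2 3 8)
      = fps_odd_part (partition_gf 2 3 8) * euler_prod 4 ^ 4 * (euler_prod 2 ^ 2 :: 'a fps)"
    by (simp only: mult_ac)
  also have "\<dots> = - 4 * euler_prod 1 ^ 2 * euler_prod 4 ^ 4"
    by (simp only: odd_B odd_part_euler_prod_1_power_4)
  also have "\<dots> = (euler_prod 4 ^ 4 * euler_prod 2 ^ 2) * (2 * partition_gf 1 2 3)"
    by (simp only: minus_4_eq_2_CHAR_3 [OF assms] partition_gf_2_3_CHAR_3 [OF assms, symmetric] mult_ac)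
  finally show "(euler_prod 4 ^ 4 * euler_prod 2 ^ 2) * fps_odd_part (partition_gf 2 3 8)
      = (euler_prod 4 ^ 4 * euler_prod 2 ^ 2) * (2 * partition_gf 1 2 3 :: 'a fps)" .
  show "(euler_prod 4 ^ 4 * euler_prod 2 ^ 2 :: 'a fps) $ 0 = 1"
    by (simp add: fps_power_zeroth)
qed

theorem mainTheorem6:
  fixes n :: nat
  assumes "n \<ge> 1"
  shows "[b 2 3 8 (2 * n + 1) = 2 * b 1 2 3 n] (mod 3)"
proof -
  have "fps_odd_part (partition_gf 2 3 8) $ n = (2 * partition_gf 1 2 3 :: 3 fps) $ n"
    by (simp add: odd_part_partition_gf_2_3_8_CHAR_3)
  then have "(of_nat (b 2 3 8 (2 * n + 1)) :: 3) = of_nat (2 * b 1 2 3 n)"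
    by (simp add: fps_odd_part_def partition_gf_def numeral_fps_const)
  then have "[b 2 3 8 (2 * n + 1) = 2 * b 1 2 3 n] (mod CHAR(3))"
    by (simp only: of_nat_eq_iff_cong_CHAR)
  then show ?thesis
    by simp
qed

end
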